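(* As $N\to\infty$, $$\sum_{k=1}^{N}\varphi(k)\,I_N\!\left(\frac{1}{k}\right)=\frac{N^3}{6\zeta(3)}+O\!\left(\frac{N^3}{\log N}\right),$$ i.e. there is a constant $C$ such that for all integers $N\ge 2$, $\left|\sum_{k=1}^{N}\varphi(k)I_N(1/k)-\frac{N^3}{6\zeta(3)}\right|\le C\,\frac{N^3}{\log N}$.
   Context: $\varphi$ is Euler's totient function and $\zeta$ is the Riemann zeta function. For a positive integer $N$, the Farey sequence of order $N$, $F_N$, is the increasing list of all reduced fractions $h/k$ with $0\le h\le k\le N$ and $\gcd(h,k)=1$; it begins with $0/1$ and ends with $1/1$. For $x\in F_N$, $I_N(x)$ denotes the position of $x$ in $F_N$, indexed starting from $1$ (so $I_N(0/1)=1$ and $I_N(1/1)=|F_N|$). *)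

theory Defs
  imports "HOL-Analysis.Analysis" "HOL-Number_Theory.Number_Theory"
begin

text \<open>Farey sequence of order N, as the set of rationals h/k in [0,1] whose
reduced denominator k is at most N (Rat.quotient_of gives the reduced form).\<close>
definition farey :: "nat \<Rightarrow> rat set" where
  "farey N = {x. 0 \<le> x \<and> x \<le> 1 \<and> snd (quotient_of x) \<le> int N}"

text \<open>Position of x in the increasing list F_N, indexed from 1.\<close>
definition farey_index :: "nat \<Rightarrow> rat \<Rightarrow> nat" where
  "farey_index N x = card {y \<in> farey N. y < x} + 1"

definition zeta_real :: "real \<Rightarrow> real" where
  "zeta_real s = (\<Sum>n. 1 / (real (Suc n)) powr s)"

end

theory Submission
  imports Defs
begin

text \<open>
  For \<open>1 \<le> k \<le> N\<close> the fractions of \<open>F\<^sub>N\<close> below \<open>1/k\<close> are \<open>0/1\<close> and the reduced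
  fractions \<open>h/q\<close> with \<open>h \<ge> 1\<close>, \<open>h k < q \<le> N\<close>; hence \<open>I\<^sub>N(1/k) = R(N,k) + 2\<close>,
  where \<open>R(N,k)\<close> counts these reduced pairs.  Put \<open>W(N) = \<Sum>\<^sub>k \<phi>(k) R(N,k)\<close>.

  Dropping coprimality and grouping the pairs \<open>(h,q)\<close> by \<open>e = gcd h q\<close> turns the
  count of all lattice pairs into \<open>\<Sum>\<^sub>e R(\<lfloor>N/e\<rfloor>,k)\<close>, while counting them column by
  column and using \<open>\<Sum>\<^sub>k \<phi>(k) \<lfloor>m/k\<rfloor> = m(m+1)/2\<close> gives the exact identity
  \<open>\<Sum>\<^sub>e W(\<lfloor>N/e\<rfloor>) = (N\<^sup>3 - N)/6\<close>.  Comparing with \<open>\<Sum>\<^sub>e \<lfloor>N/e\<rfloor>\<^sup>3 = N\<^sup>3 \<zeta>(3) + O(N\<^sup>2)\<close>,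
  the error \<open>E(N) = W(N) - N\<^sup>3/(6\<zeta>(3))\<close> satisfies \<open>\<Sum>\<^sub>e E(\<lfloor>N/e\<rfloor>) = O(N\<^sup>2)\<close>, and a
  strong induction (using \<open>\<Sum>\<^sub>e\<^sub>\<ge>\<^sub>2 1/e\<^sup>2 < 1\<close>) yields \<open>|E(N)| \<le> 8 N\<^sup>2\<close>.  The
  theorem follows, with the even stronger error term \<open>O(N\<^sup>2)\<close>.
\<close>

section \<open>The Farey index of \<open>1/k\<close> as a count of reduced pairs\<close>

definition reduced_pairs :: "nat \<Rightarrow> nat \<Rightarrow> (nat \<times> nat) set" where
  "reduced_pairs M k = {(h, q). 1 \<le> h \<and> h < q \<and> h * k < q \<and> q \<le> M \<and> coprime h q}"

definition pair_rat :: "nat \<times> nat \<Rightarrow> rat" where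
  "pair_rat p = of_nat (fst p) / of_nat (snd p)"

lemma reduced_pairs_finite: "finite (reduced_pairs M k)"
  by (rule finite_subset[of _ "{0..M} \<times> {0..M}"]) (auto simp: reduced_pairs_def)

lemma quotient_of_coprime_pair:
  assumes "coprime h q" "q > 0"
  shows "quotient_of (pair_rat (h, q)) = (int h, int q)"
proof -
  have "pair_rat (h, q) = Fract (int h) (int q)"
    by (simp add: pair_rat_def Fract_of_int_quotient)
  then show ?thesis using assms by (simp add: quotient_of_Fract)
qed

lemma pair_rat_inj: "inj_on pair_rat (reduced_pairs M k)"
proof (rule inj_onI)
  fix a b assume a: "a \<in> reduced_pairs M k" and b: "b \<in> reduced_pairs M k"
    and eq: "pair_rat a = pair_rat b"
  obtain h q h' q' where ab: "a = (h, q)" "b = (h', q')" by (cases a, cases b)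
  have "coprime h q" "q > 0" "coprime h' q'" "q' > 0"
    using a b unfolding ab reduced_pairs_def by auto
  then have "(int h, int q) = (int h', int q')"
    using eq quotient_of_coprime_pair unfolding ab by metis
  then show "a = b" using ab by simp
qed

lemma farey_below_reciprocal_pair:
  assumes k: "1 \<le> k" and y: "y \<in> farey N" "0 < y" "y < 1 / of_nat k"
  shows "y \<in> pair_rat ` reduced_pairs N k"
proof -
  obtain a b where qy: "quotient_of y = (a, b)" by (cases "quotient_of y")
  have b0: "b > 0" and cop: "coprime a b" and yab: "y = of_int a / of_int b"
    using qy by (auto intro: quotient_of_denom_pos quotient_of_coprime quotient_of_div)
  have a0: "a > 0" using y(2) b0 yab by (simp add: zero_less_divide_iff)
  have bN: "b \<le> int N" using y(1) qy by (simp add: farey_def)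
  have "of_int a * of_nat k < (of_int b :: rat)"
    using y(3) yab b0 k by (simp add: divide_simps)
  then have "a * int k < b"
    by (metis of_int_less_iff of_int_mult of_int_of_nat_eq)
  moreover have "int (nat a * k) = a * int k" using a0 by simp
  ultimately have "nat a * k < nat b" by linarith
  moreover have "coprime (nat a) (nat b)"
    using cop a0 b0 coprime_int_iff[of "nat a" "nat b"] by simp
  moreover have "nat a < nat b" using \<open>nat a * k < nat b\<close> k
    by (metis le_less_trans mult.right_neutral mult_le_mono2)
  ultimately have "(nat a, nat b) \<in> reduced_pairs N k"
    using a0 bN unfolding reduced_pairs_def by auto
  moreover have "pair_rat (nat a, nat b) = y" using yab a0 b0 by (simp add: pair_rat_def)
  ultimately show ?thesis by blast
qed

lemma reduced_pair_in_farey: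
  assumes k: "1 \<le> k" and p: "(h, q) \<in> reduced_pairs N k"
  shows "pair_rat (h, q) \<in> farey N" "pair_rat (h, q) < 1 / of_nat k"
proof -
  have hk: "h * k < q" and qN: "q \<le> N" and cop: "coprime h q"
    using p by (auto simp: reduced_pairs_def)
  have q0: "q > 0" using hk by simp
  have "h < q" using p by (simp add: reduced_pairs_def)
  then have "pair_rat (h, q) \<le> 1" by (simp add: pair_rat_def)
  then show "pair_rat (h, q) \<in> farey N"
    using quotient_of_coprime_pair[OF cop q0] qN by (simp add: farey_def pair_rat_def)
  have "(of_nat h * of_nat k :: rat) < of_nat q"
    using hk by (metis of_nat_less_iff of_nat_mult)
  then show "pair_rat (h, q) < 1 / of_nat k"
    using q0 k by (simp add: pair_rat_def divide_simps)
qed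

lemma farey_below_reciprocal:
  assumes "1 \<le> k" "1 \<le> N"
  shows "{y \<in> farey N. y < 1 / of_nat k} = insert 0 (pair_rat ` reduced_pairs N k)"
proof (intro equalityI subsetI)
  fix y assume "y \<in> {y \<in> farey N. y < 1 / of_nat k}"
  moreover have "y \<in> farey N \<Longrightarrow> 0 \<le> y" by (simp add: farey_def)
  ultimately show "y \<in> insert 0 (pair_rat ` reduced_pairs N k)"
    using farey_below_reciprocal_pair[OF assms(1)] by (cases "y = 0") auto
next
  fix y assume "y \<in> insert 0 (pair_rat ` reduced_pairs N k)"
  then show "y \<in> {y \<in> farey N. y < 1 / of_nat k}"
    using reduced_pair_in_farey[OF assms(1)] assms by (auto simp: farey_def)
qed

text \<open>Besides the reduced pairs, \<open>0/1\<close> precedes \<open>1/k\<close> and the index starts at 1.\<close>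
lemma farey_index_reciprocal:
  assumes "1 \<le> k" "1 \<le> N"
  shows "farey_index N (1 / of_nat k) = card (reduced_pairs N k) + 2"
proof -
  have "0 \<notin> pair_rat ` reduced_pairs N k" by (auto simp: reduced_pairs_def pair_rat_def)
  then show ?thesis
    unfolding farey_index_def farey_below_reciprocal[OF assms]
    using pair_rat_inj reduced_pairs_finite by (simp add: card_image)
qed

section \<open>The gcd decomposition and an exact identity\<close>

definition lattice_pairs :: "nat \<Rightarrow> nat \<Rightarrow> (nat \<times> nat) set" where
  "lattice_pairs M k = {(h, q). 1 \<le> h \<and> h * k < q \<and> q \<le> M}"

text \<open>Multiplying a reduced pair by \<open>e\<close> is injective, since \<open>e\<close> is recovered as the gcd.\<close>
lemma scaling_inj: "inj_on (\<lambda>(e, h, q). (e * h, e * q)) (SIGMA e:{1..N}. reduced_pairs (N div e) k)"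
proof (rule inj_onI)
  fix x y
  assume x: "x \<in> (SIGMA e:{1..N}. reduced_pairs (N div e) k)"
    and y: "y \<in> (SIGMA e:{1..N}. reduced_pairs (N div e) k)"
    and eq: "(\<lambda>(e, h, q). (e * h, e * q)) x = (\<lambda>(e, h, q). (e * h, e * q)) y"
  obtain e h q e' h' q' where xy: "x = (e, h, q)" "y = (e', h', q')" by (cases x, cases y) auto
  have cop: "coprime h q" "coprime h' q'" and e0: "e \<ge> 1"
    using x y unfolding xy reduced_pairs_def by auto
  have hq: "e * h = e' * h'" "e * q = e' * q'" using eq unfolding xy by auto
  have "e = gcd (e * h) (e * q)" "e' = gcd (e' * h') (e' * q')"
    using cop gcd_mult_distrib_nat by (simp_all add: gcd_mult_left)
  then have "e = e'" using hq by simp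
  then show "x = y" using hq e0 unfolding xy by simp
qed

text \<open>Every lattice pair is \<open>e\<close> times a reduced pair, with \<open>e\<close> its gcd.\<close>
lemma lattice_pairs_gcd_decomposition:
  assumes k: "1 \<le> k"
  shows "lattice_pairs N k = (\<lambda>(e, h, q). (e * h, e * q)) ` (SIGMA e:{1..N}. reduced_pairs (N div e) k)"
proof (intro equalityI subsetI)
  fix z assume "z \<in> lattice_pairs N k"
  then obtain h q where z: "z = (h, q)" and h1: "1 \<le> h" and hk: "h * k < q" and qN: "q \<le> N"
    by (auto simp: lattice_pairs_def)
  define g where "g = gcd h q"
  have g0: "g > 0" using h1 by (simp add: g_def)
  have hg: "h = g * (h div g)" and qg: "q = g * (q div g)" by (simp_all add: g_def)
  have "g \<le> q" using hk unfolding g_def by (intro gcd_le2_nat) simp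
  then have "g \<in> {1..N}" using g0 qN by simp
  moreover have "1 \<le> h div g" using h1 hg by (metis less_one mult_0_right not_less)
  moreover have "h div g < q div g"
    using hk k hg qg by (metis le_less_trans mult.right_neutral mult_le_mono2 mult_less_cancel1)
  moreover have "(h div g) * k < q div g"
    using hk hg qg by (metis mult.assoc mult_less_cancel1)
  moreover have "q div g \<le> N div g" using qN by (rule div_le_mono)
  moreover have "coprime (h div g) (q div g)" using h1 div_gcd_coprime[of h q] by (simp add: g_def)
  ultimately have "(g, h div g, q div g) \<in> (SIGMA e:{1..N}. reduced_pairs (N div e) k)"
    by (simp add: reduced_pairs_def)
  moreover have "z = (\<lambda>(e, h, q). (e * h, e * q)) (g, h div g, q div g)" using z hg qg by simp
  ultimately show "z \<in> (\<lambda>(e, h, q). (e * h, e * q)) ` (SIGMA e:{1..N}. reduced_pairs (N div e) k)"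
    by blast
next
  fix z assume "z \<in> (\<lambda>(e, h, q). (e * h, e * q)) ` (SIGMA e:{1..N}. reduced_pairs (N div e) k)"
  then obtain e h q where z: "z = (e * h, e * q)" and e1: "1 \<le> e" and h1: "1 \<le> h"
    and hk: "h * k < q" and qN: "q \<le> N div e"
    by (auto simp: reduced_pairs_def)
  have "(e * h) * k < e * q" using hk e1 by (simp add: mult.assoc)
  moreover have "e * q \<le> N" using qN e1 by (simp add: less_eq_div_iff_mult_less_eq mult.commute)
  ultimately show "z \<in> lattice_pairs N k" using z e1 h1 by (simp add: lattice_pairs_def)
qed

lemma card_lattice_pairs_gcd:
  assumes "1 \<le> k"
  shows "card (lattice_pairs N k) = (\<Sum>e=1..N. card (reduced_pairs (N div e) k))"
proof -
  have "card (lattice_pairs N k) = card (SIGMA e:{1..N}. reduced_pairs (N div e) k)"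
    unfolding lattice_pairs_gcd_decomposition[OF assms] by (rule card_image[OF scaling_inj])
  also have "\<dots> = (\<Sum>e=1..N. card (reduced_pairs (N div e) k))"
    by (rule card_SigmaI) (auto simp: reduced_pairs_finite)
  finally show ?thesis .
qed

text \<open>Counting lattice pairs column by column: for fixed \<open>q\<close> there are \<open>\<lfloor>(q-1)/k\<rfloor>\<close> of them.\<close>
lemma card_lattice_pairs_columns:
  assumes k: "1 \<le> k"
  shows "card (lattice_pairs N k) = (\<Sum>q=1..N. (q - 1) div k)"
proof -
  have below: "h * k < q \<longleftrightarrow> 1 \<le> q \<and> h \<le> (q - 1) div k" for h q
    using k less_eq_div_iff_mult_less_eq[of k h "q - 1"] by auto
  have "lattice_pairs N k = prod.swap ` (SIGMA q:{1..N}. {1..(q - 1) div k})"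
    by (auto simp: lattice_pairs_def below image_iff)
  then have "card (lattice_pairs N k) = card (SIGMA q:{1..N}. {1..(q - 1) div k})"
    by (simp add: card_image)
  then show ?thesis by simp
qed

text \<open>The classical identity \<open>\<Sum>\<^sub>k\<^sub>\<le>\<^sub>M \<phi>(k) \<lfloor>m/k\<rfloor> = m(m+1)/2\<close> for \<open>m \<le> M\<close>, proved by
  induction on \<open>m\<close>: the increment is \<open>\<Sum>\<^sub>d\<^sub>|\<^sub>m\<^sub>+\<^sub>1 \<phi>(d) = m + 1\<close>.\<close>
lemma totient_floor_sum:
  "m \<le> M \<Longrightarrow> 2 * (\<Sum>k=1..M. totient k * (m div k)) = m * (m + 1)"
proof (induction m)
  case 0
  then show ?case by simp
next
  case (Suc m)
  have div_Suc_dvd: "Suc m div k = m div k + (if k dvd Suc m then 1 else 0)" if "0 < k" for k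
    using div_Suc[of m k] that by (auto simp: dvd_eq_mod_eq_0)
  have "1 \<le> d \<and> d \<le> M" if "d dvd Suc m" for d
    using Suc.prems dvd_imp_le[OF that] that by (cases d) auto
  then have divisors: "{k \<in> {1..M}. k dvd Suc m} = {d. d dvd Suc m}" by auto
  have "(\<Sum>k=1..M. totient k * (Suc m div k))
      = (\<Sum>k=1..M. totient k * (m div k) + (if k dvd Suc m then totient k else 0))"
    by (intro sum.cong) (simp_all add: div_Suc_dvd algebra_simps)
  also have "\<dots> = (\<Sum>k=1..M. totient k * (m div k)) + (\<Sum>k\<in>{k \<in> {1..M}. k dvd Suc m}. totient k)"
    by (simp only: sum.distrib sum.inter_filter[OF finite_atLeastAtMost])
  also have "(\<Sum>k\<in>{k \<in> {1..M}. k dvd Suc m}. totient k) = Suc m"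
    unfolding divisors by (rule totient_divisor_sum)
  finally show ?case using Suc by (simp add: algebra_simps)
qed

lemma sum_consecutive_products: "real (\<Sum>q=1..N. (q - 1) * q) = (real N ^ 3 - real N) / 3"
  by (induction N) (simp_all add: power3_eq_cube algebra_simps add_divide_distrib)

definition weighted_count :: "nat \<Rightarrow> real" where
  "weighted_count M = (\<Sum>k=1..M. real (totient k) * real (card (reduced_pairs M k)))"

text \<open>Since \<open>R(M,k) = 0\<close> for \<open>k \<ge> M\<close>, the range of \<open>k\<close> may be enlarged.\<close>
lemma weighted_count_extend:
  assumes "M \<le> N"
  shows "weighted_count M = (\<Sum>k=1..N. real (totient k) * real (card (reduced_pairs M k)))"
proof -
  have "reduced_pairs M k = {}" if "M \<le> k" for k
    using that by (auto simp: reduced_pairs_def dest: le_less_trans[OF mult_le_mono2])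
  then show ?thesis
    unfolding weighted_count_def by (intro sum.mono_neutral_left) (use assms in auto)
qed

text \<open>The exact identity \<open>\<Sum>\<^sub>e\<^sub>\<le>\<^sub>N W(\<lfloor>N/e\<rfloor>) = (N\<^sup>3 - N)/6\<close>: expand \<open>W\<close>, recombine the
  reduced pairs into lattice pairs, count these by columns and apply \<open>totient_floor_sum\<close>.\<close>
lemma weighted_count_identity:
  "(\<Sum>e=1..N. weighted_count (N div e)) = (real N ^ 3 - real N) / 6"
proof -
  have "(\<Sum>e=1..N. weighted_count (N div e))
      = (\<Sum>e=1..N. \<Sum>k=1..N. real (totient k) * real (card (reduced_pairs (N div e) k)))"
    by (intro sum.cong refl weighted_count_extend div_le_dividend)
  also have "\<dots> = (\<Sum>k=1..N. real (totient k) * real (card (lattice_pairs N k)))"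
    by (subst sum.swap) (intro sum.cong refl, simp add: card_lattice_pairs_gcd sum_distrib_left)
  also have "\<dots> = (\<Sum>k=1..N. real (totient k * ((\<Sum>q=1..N. (q - 1) div k))))"
    by (intro sum.cong refl) (simp add: card_lattice_pairs_columns)
  also have "\<dots> = real (\<Sum>q=1..N. \<Sum>k=1..N. totient k * ((q - 1) div k))"
    by (simp add: sum_distrib_left) (rule sum.swap)
  also have "\<dots> = real (\<Sum>q=1..N. (q - 1) * q) / 2"
  proof -
    have "(\<Sum>q=1..N. 2 * (\<Sum>k=1..N. totient k * ((q - 1) div k))) = (\<Sum>q=1..N. (q - 1) * q)"
    proof (rule sum.cong[OF refl])
      fix q assume q_range: "q \<in> {1..N}"
      obtain r where q: "q = Suc r" using q_range by (cases q) auto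
      show "2 * (\<Sum>k=1..N. totient k * ((q - 1) div k)) = (q - 1) * q"
        using totient_floor_sum[of r N] q_range unfolding q by simp
    qed
    then have "2 * (\<Sum>q=1..N. \<Sum>k=1..N. totient k * ((q - 1) div k)) = (\<Sum>q=1..N. (q - 1) * q)"
      by (simp only: sum_distrib_left)
    then show ?thesis
      by (simp only: of_nat_mult[symmetric] of_nat_numeral[symmetric, where 'a=real])
  qed
  also have "\<dots> = (real N ^ 3 - real N) / 6" unfolding sum_consecutive_products by simp
  finally show ?thesis .
qed

section \<open>Elementary bounds for \<open>\<Sum> 1/e\<^sup>p\<close> and \<open>\<zeta>(3)\<close>\<close>

text \<open>Telescoping: \<open>1/e\<^sup>p \<le> 1/(e-1) - 1/e\<close> for \<open>p \<ge> 2\<close>, so tails of \<open>\<Sum> 1/e\<^sup>p\<close> are at most \<open>1/m\<close>.\<close>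
lemma inverse_power_tail:
  assumes p: "2 \<le> p" and m: "1 \<le> m" and "m \<le> n"
  shows "(\<Sum>e=Suc m..n. 1 / real e ^ p) \<le> 1 / real m - 1 / real n"
  using assms(3)
proof (induction n rule: dec_induct)
  case base
  then show ?case by simp
next
  case (step n)
  have n1: "1 \<le> real n" using step.hyps m by simp
  have "real n * (real n + 1) \<le> (real n + 1) ^ 2" by (simp add: power2_eq_square)
  also have "\<dots> \<le> (real n + 1) ^ p" using p n1 by (intro power_increasing) auto
  finally have "1 / (real n + 1) ^ p \<le> 1 / (real n * (real n + 1))"
    using n1 by (intro divide_left_mono) auto
  also have "\<dots> = 1 / real n - 1 / (real n + 1)" using n1 by (simp add: field_simps)
  finally show ?case using step.IH step.hyps by (simp add: add.commute)
qed

text \<open>The numerical bound \<open>\<Sum>\<^sub>e\<^sub>\<ge>\<^sub>2 1/e\<^sup>2 \<le> 3/4\<close>, which drives the induction in \<open>count_error_bound\<close>.\<close>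
lemma inverse_squares_from_two: "(\<Sum>e=2..n. 1 / real e ^ 2) \<le> 3 / 4"
proof (cases "2 \<le> n")
  case True
  have "(\<Sum>e=2..n. 1 / real e ^ 2) = 1 / 4 + (\<Sum>e=Suc 2..n. 1 / real e ^ 2)"
    using True by (simp add: sum.atLeast_Suc_atMost)
  also have "\<dots> \<le> 1 / 4 + (1 / 2 - 1 / real n)"
    using inverse_power_tail[of 2 2 n] True by simp
  also have "\<dots> \<le> 3 / 4" by simp
  finally show ?thesis .
qed simp

lemma inverse_squares: "(\<Sum>e=1..n. 1 / real e ^ 2) \<le> 7 / 4"
proof (cases "1 \<le> n")
  case True
  then have "(\<Sum>e=1..n. 1 / real e ^ 2) = 1 + (\<Sum>e=2..n. 1 / real e ^ 2)"
    by (simp add: sum.atLeast_Suc_atMost numeral_2_eq_2)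
  then show ?thesis using inverse_squares_from_two[of n] by simp
qed simp

definition zeta3_partial :: "nat \<Rightarrow> real" where
  "zeta3_partial n = (\<Sum>e=1..n. 1 / real e ^ 3)"

lemma zeta3_partial_le:
  assumes N: "1 \<le> N"
  shows "zeta3_partial n \<le> zeta3_partial N + 1 / real N"
proof (cases "n \<le> N")
  case True
  then have "zeta3_partial n \<le> zeta3_partial N"
    unfolding zeta3_partial_def by (intro sum_mono2) auto
  then show ?thesis by (simp add: add_increasing2)
next
  case False
  then obtain d where n: "n = N + d" using le_Suc_ex by force
  have "zeta3_partial n = zeta3_partial N + (\<Sum>e=N + 1..n. 1 / real e ^ 3)"
    unfolding zeta3_partial_def n using N by (intro sum.ub_add_nat) simp
  also have "\<dots> \<le> zeta3_partial N + (1 / real N - 1 / real n)"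
    using inverse_power_tail[of 3 N n] N False by simp
  also have "\<dots> \<le> zeta3_partial N + 1 / real N" by simp
  finally show ?thesis .
qed

lemma zeta3_series:
  shows "summable (\<lambda>i. 1 / real (Suc i) ^ 3)" "zeta_real 3 = (\<Sum>i. 1 / real (Suc i) ^ 3)"
proof -
  show "summable (\<lambda>i. 1 / real (Suc i) ^ 3)"
  proof (rule summableI_nonneg_bounded)
    show "(\<Sum>i<n. 1 / real (Suc i) ^ 3) \<le> zeta3_partial 1 + 1" for n
      using zeta3_partial_le[of 1 n] by (simp add: zeta3_partial_def sum.atLeast1_atMost_eq)
  qed simp
  show "zeta_real 3 = (\<Sum>i. 1 / real (Suc i) ^ 3)" by (simp add: zeta_real_def)
qed

lemma zeta3_bounds:
  assumes "1 \<le> N"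
  shows "zeta3_partial N \<le> zeta_real 3" "zeta_real 3 \<le> zeta3_partial N + 1 / real N"
proof -
  have partial: "(\<Sum>i<n. 1 / real (Suc i) ^ 3) = zeta3_partial n" for n
    by (simp add: zeta3_partial_def sum.atLeast1_atMost_eq)
  show "zeta3_partial N \<le> zeta_real 3"
    unfolding zeta3_series(2) partial[symmetric] by (rule sum_le_suminf[OF zeta3_series(1)]) auto
  show "zeta_real 3 \<le> zeta3_partial N + 1 / real N"
    unfolding zeta3_series(2)
    by (rule suminf_le_const[OF zeta3_series(1)]) (unfold partial, rule zeta3_partial_le[OF assms])
qed

text \<open>In particular \<open>\<zeta>(3) \<ge> 1\<close>, so dividing by \<open>6\<zeta>(3)\<close> does not enlarge errors.\<close>
lemma zeta3_ge_1: "1 \<le> zeta_real 3"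
  using zeta3_bounds(1)[of 1] by (simp add: zeta3_partial_def)

section \<open>The error term\<close>

text \<open>If \<open>y \<le> x < y + 1\<close> then \<open>x\<^sup>3 - y\<^sup>3 \<le> 3x\<^sup>2\<close>; applied to \<open>x = N/e\<close>, \<open>y = \<lfloor>N/e\<rfloor>\<close>.\<close>
lemma cube_gap:
  fixes x y :: real
  assumes "0 \<le> y" "y \<le> x" "x < y + 1"
  shows "x ^ 3 - y ^ 3 \<le> 3 * x ^ 2"
proof -
  have "x ^ 3 - y ^ 3 = (x - y) * (x\<^sup>2 + x * y + y\<^sup>2)"
    by (simp add: power2_eq_square power3_eq_cube algebra_simps)
  also have "\<dots> \<le> 1 * (3 * x\<^sup>2)"
  proof (rule mult_mono)
    have "x * y \<le> x\<^sup>2" "y\<^sup>2 \<le> x\<^sup>2"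
      using assms by (simp_all add: power2_eq_square mult_left_mono mult_mono)
    then show "x\<^sup>2 + x * y + y\<^sup>2 \<le> 3 * x\<^sup>2" by simp
  qed (use assms in simp_all)
  finally show ?thesis by simp
qed

lemma real_div_bounds:
  assumes "0 < e"
  shows "real (N div e) \<le> real N / real e" "real N / real e < real (N div e) + 1"
proof -
  have N: "real N = real e * real (N div e) + real (N mod e)"
    by (metis div_mult_mod_eq of_nat_add of_nat_mult mult.commute)
  have "real (N mod e) < real e" using assms by simp
  then show "real (N div e) \<le> real N / real e" "real N / real e < real (N div e) + 1"
    using N assms by (simp_all add: field_simps)
qed

lemma sum_floor_cubes:
  assumes N: "1 \<le> N"
  shows "0 \<le> real N ^ 3 * zeta_real 3 - (\<Sum>e=1..N. real (N div e) ^ 3)"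
    and "real N ^ 3 * zeta_real 3 - (\<Sum>e=1..N. real (N div e) ^ 3) \<le> 7 * real N ^ 2"
proof -
  have upper: "real (N div e) ^ 3 \<le> real N ^ 3 * (1 / real e ^ 3)" if "e \<in> {1..N}" for e
  proof -
    have "real (N div e) ^ 3 \<le> (real N / real e) ^ 3"
      using real_div_bounds(1)[of e N] that by (intro power_mono) auto
    then show ?thesis by (simp add: power_divide)
  qed
  have lower: "real N ^ 3 * (1 / real e ^ 3) - 3 * real N ^ 2 * (1 / real e ^ 2) \<le> real (N div e) ^ 3"
    if "e \<in> {1..N}" for e
  proof -
    have "(real N / real e) ^ 3 - real (N div e) ^ 3 \<le> 3 * (real N / real e) ^ 2"
      using real_div_bounds[of e N] that by (intro cube_gap) auto
    then show ?thesis by (simp add: power_divide)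
  qed
  have "(\<Sum>e=1..N. real (N div e) ^ 3) \<le> (\<Sum>e=1..N. real N ^ 3 * (1 / real e ^ 3))"
    by (rule sum_mono) (rule upper)
  also have "\<dots> = real N ^ 3 * zeta3_partial N" by (simp add: zeta3_partial_def sum_distrib_left)
  also have "\<dots> \<le> real N ^ 3 * zeta_real 3" using zeta3_bounds(1)[OF N] by (intro mult_left_mono) auto
  finally show "0 \<le> real N ^ 3 * zeta_real 3 - (\<Sum>e=1..N. real (N div e) ^ 3)" by simp
  have "real N ^ 3 * zeta_real 3 \<le> real N ^ 3 * (zeta3_partial N + 1 / real N)"
    using zeta3_bounds(2)[OF N] by (intro mult_left_mono) auto
  also have "\<dots> = real N ^ 3 * zeta3_partial N + real N ^ 2"
    using N by (simp add: algebra_simps power2_eq_square power3_eq_cube)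
  also have "real N ^ 3 * zeta3_partial N
      \<le> (\<Sum>e=1..N. real (N div e) ^ 3) + 3 * real N ^ 2 * (\<Sum>e=1..N. 1 / real e ^ 2)"
  proof -
    have "(\<Sum>e=1..N. real N ^ 3 * (1 / real e ^ 3) - 3 * real N ^ 2 * (1 / real e ^ 2))
        \<le> (\<Sum>e=1..N. real (N div e) ^ 3)"
      by (rule sum_mono) (rule lower)
    then show ?thesis by (simp add: zeta3_partial_def sum_subtractf sum_distrib_left)
  qed
  also have "3 * real N ^ 2 * (\<Sum>e=1..N. 1 / real e ^ 2) \<le> 3 * real N ^ 2 * (7 / 4)"
    using inverse_squares[of N] by (intro mult_left_mono) auto
  finally show "real N ^ 3 * zeta_real 3 - (\<Sum>e=1..N. real (N div e) ^ 3) \<le> 7 * real N ^ 2"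
    using zero_le_power2[of "real N"] by linarith
qed

definition count_error :: "nat \<Rightarrow> real" where
  "count_error n = weighted_count n - real n ^ 3 / (6 * zeta_real 3)"

lemma count_error_divisor_sum:
  assumes N: "1 \<le> N"
  shows "\<bar>\<Sum>e=1..N. count_error (N div e)\<bar> \<le> 2 * real N ^ 2"
proof -
  define z where "z = zeta_real 3"
  define D where "D = (\<Sum>e=1..N. real (N div e) ^ 3)"
  have z: "1 \<le> z" using zeta3_ge_1 by (simp add: z_def)
  have gap: "0 \<le> real N ^ 3 * z - D" "real N ^ 3 * z - D \<le> 7 * real N ^ 2"
    using sum_floor_cubes[OF N] by (simp_all add: z_def D_def)
  have "(\<Sum>e=1..N. count_error (N div e))
      = (\<Sum>e=1..N. weighted_count (N div e)) - (\<Sum>e=1..N. real (N div e) ^ 3 / (6 * z))"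
    by (simp add: count_error_def sum_subtractf z_def)
  also have "\<dots> = (real N ^ 3 - real N) / 6 - D / (6 * z)"
    unfolding weighted_count_identity D_def sum_divide_distrib ..
  also have "\<dots> = (real N ^ 3 * z - D) / (6 * z) - real N / 6"
    using z by (simp add: field_simps)
  finally have eq: "(\<Sum>e=1..N. count_error (N div e)) = (real N ^ 3 * z - D) / (6 * z) - real N / 6" .
  have "(real N ^ 3 * z - D) / (6 * z) \<le> (real N ^ 3 * z - D) / 6"
    using gap(1) z by (intro divide_left_mono) auto
  also have "\<dots> \<le> 7 * real N ^ 2 / 6" using gap(2) by simp
  finally have upper: "(real N ^ 3 * z - D) / (6 * z) \<le> 7 * real N ^ 2 / 6" .
  have lower: "0 \<le> (real N ^ 3 * z - D) / (6 * z)" using gap(1) z by simp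
  have "real N \<le> real N ^ 2" using N by (simp add: power2_eq_square)
  then show ?thesis unfolding eq abs_le_iff using upper lower by (intro conjI) linarith+
qed

text \<open>Strong induction: \<open>E(n) = \<Sum>\<^sub>e E(\<lfloor>n/e\<rfloor>) - \<Sum>\<^sub>e\<^sub>\<ge>\<^sub>2 E(\<lfloor>n/e\<rfloor>)\<close>, and the second
  sum is at most \<open>8 n\<^sup>2 \<Sum>\<^sub>e\<^sub>\<ge>\<^sub>2 1/e\<^sup>2 \<le> 6 n\<^sup>2\<close> by the induction hypothesis.\<close>
lemma count_error_bound: "\<bar>count_error n\<bar> \<le> 8 * real n ^ 2"
proof (induction n rule: less_induct)
  case (less n)
  show ?case
  proof (cases "n = 0")
    case True
    then show ?thesis by (simp add: count_error_def weighted_count_def)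
  next
    case False
    then have n1: "1 \<le> n" by simp
    have split: "(\<Sum>e=1..n. count_error (n div e)) = count_error n + (\<Sum>e=2..n. count_error (n div e))"
      using n1 by (simp add: sum.atLeast_Suc_atMost numeral_2_eq_2)
    have term_bound: "\<bar>count_error (n div e)\<bar> \<le> 8 * real n ^ 2 * (1 / real e ^ 2)"
      if e: "e \<in> {2..n}" for e
    proof -
      have "\<bar>count_error (n div e)\<bar> \<le> 8 * real (n div e) ^ 2"
        using e n1 by (intro less.IH) simp
      also have "\<dots> \<le> 8 * (real n / real e) ^ 2"
        using real_div_bounds(1)[of e n] e by (intro mult_left_mono power_mono) auto
      finally show ?thesis by (simp add: power_divide)
    qed
    have "\<bar>\<Sum>e=2..n. count_error (n div e)\<bar> \<le> (\<Sum>e=2..n. 8 * real n ^ 2 * (1 / real e ^ 2))"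
      by (rule order_trans[OF sum_abs sum_mono]) (rule term_bound)
    also have "\<dots> = 8 * real n ^ 2 * (\<Sum>e=2..n. 1 / real e ^ 2)" by (simp add: sum_distrib_left)
    also have "\<dots> \<le> 8 * real n ^ 2 * (3 / 4)"
      using inverse_squares_from_two[of n] by (intro mult_left_mono) auto
    finally show ?thesis using count_error_divisor_sum[OF n1] split by linarith
  qed
qed

lemma farey_weighted_sum:
  assumes "1 \<le> N"
  shows "(\<Sum>k=1..N. real (totient k) * real (farey_index N (1 / of_nat k)))
    = weighted_count N + 2 * (\<Sum>k=1..N. real (totient k))"
proof -
  have "(\<Sum>k=1..N. real (totient k) * real (farey_index N (1 / of_nat k)))
      = (\<Sum>k=1..N. real (totient k) * real (card (reduced_pairs N k)) + 2 * real (totient k))"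
    using assms by (intro sum.cong refl) (simp add: farey_index_reciprocal algebra_simps)
  then show ?thesis by (simp add: weighted_count_def sum.distrib sum_distrib_left)
qed

lemma totient_sum_le: "(\<Sum>k=1..N. real (totient k)) \<le> real N ^ 2"
proof -
  have "(\<Sum>k=1..N. real (totient k)) \<le> (\<Sum>k=1..N. real N)"
    by (intro sum_mono) (use totient_le order_trans in auto)
  then show ?thesis by (simp add: power2_eq_square)
qed

theorem theorem4:
  shows "\<exists>C::real. \<forall>N::nat. N \<ge> 2 \<longrightarrow>
    \<bar>(\<Sum>k=1..N. real (totient k) * real (farey_index N (1 / of_nat k)))
       - real N ^ 3 / (6 * zeta_real 3)\<bar> \<le> C * real N ^ 3 / ln (real N)"
proof (intro exI allI impI)
  fix N :: nat
  assume N: "N \<ge> 2"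
  have "\<bar>(\<Sum>k=1..N. real (totient k) * real (farey_index N (1 / of_nat k)))
          - real N ^ 3 / (6 * zeta_real 3)\<bar>
      = \<bar>count_error N + 2 * (\<Sum>k=1..N. real (totient k))\<bar>"
    using N unfolding farey_weighted_sum[OF order_trans[OF one_le_numeral N]] count_error_def
    by simp
  also have "\<dots> \<le> 10 * real N ^ 2"
    using count_error_bound[of N] totient_sum_le[of N] sum_nonneg[of "{1..N}" "\<lambda>k. real (totient k)"]
    by (simp add: abs_le_iff)
  also have "\<dots> = 10 * real N ^ 3 / real N"
    using N by (simp add: power2_eq_square power3_eq_cube)
  also have "\<dots> \<le> 10 * real N ^ 3 / ln (real N)"
    using N ln_le_minus_one[of "real N"] by (intro divide_left_mono) auto
  finally show "\<bar>(\<Sum>k=1..N. real (totient k) * real (farey_index N (1 / of_nat k)))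
      - real N ^ 3 / (6 * zeta_real 3)\<bar> \<le> 10 * real N ^ 3 / ln (real N)" .
qed

end
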